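(* Let $\mathcal{C}$ be a deflation-exact category and let $\mathcal{A}$ be a non-empty full subcategory satisfying axiom (A3). Let $f\colon X\rightarrowtail Y$ and $g\colon Y\rightarrowtail Z$ be inflations. If $f$ is an $\mathcal{A}^{-1}$-inflation, then $g\circ f$ is an inflation.
   Context: A conflation category is an additive category with a class of kernel-cokernel pairs (closed under isomorphisms) called conflations; first map an inflation, second a deflation. A deflation-exact category is a conflation category satisfying: (R0) $1_0$ is a deflation; (R1) composites of deflations are deflations; (R2) pullbacks of deflations along arbitrary morphisms exist and are deflations. (A3): if $a\colon C\rightarrowtail D$ is an inflation and $b\colon C\twoheadrightarrow A$ a deflation with $A\in\mathcal{A}$, the pushout of $a$ along $b$ exists and yields a deflation $D\twoheadrightarrow P$ and an inflation $A\rightarrowtail P$. An $\mathcal{A}^{-1}$-inflation is an inflation whose cokernel lies in $\mathcal{A}$. *)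

theory Defs
  imports Main
begin

record ('o, 'm) addcat =
  Ob  :: "'o set"
  Ar  :: "'m set"
  Dom :: "'m \<Rightarrow> 'o"
  Cod :: "'m \<Rightarrow> 'o"
  Id  :: "'o \<Rightarrow> 'm"
  Cmp :: "'m \<Rightarrow> 'm \<Rightarrow> 'm"   (* Cmp C g f = g \<circ> f *)
  Add :: "'m \<Rightarrow> 'm \<Rightarrow> 'm"
  Neg :: "'m \<Rightarrow> 'm"
  Zero :: "'o \<Rightarrow> 'o \<Rightarrow> 'm"

definition hom :: "('o, 'm, 'x) addcat_scheme \<Rightarrow> 'o \<Rightarrow> 'o \<Rightarrow> 'm set" where
  "hom C X Y = {f \<in> Ar C. Dom C f = X \<and> Cod C f = Y}"

definition category :: "('o, 'm, 'x) addcat_scheme \<Rightarrow> bool" where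
  "category C \<longleftrightarrow>
     (\<forall>f \<in> Ar C. Dom C f \<in> Ob C \<and> Cod C f \<in> Ob C) \<and>
     (\<forall>X \<in> Ob C. Id C X \<in> hom C X X) \<and>
     (\<forall>X \<in> Ob C. \<forall>Y \<in> Ob C. \<forall>Z \<in> Ob C. \<forall>f \<in> hom C X Y. \<forall>g \<in> hom C Y Z.
        Cmp C g f \<in> hom C X Z) \<and>
     (\<forall>W \<in> Ob C. \<forall>X \<in> Ob C. \<forall>Y \<in> Ob C. \<forall>Z \<in> Ob C.
        \<forall>f \<in> hom C W X. \<forall>g \<in> hom C X Y. \<forall>h \<in> hom C Y Z.
        Cmp C h (Cmp C g f) = Cmp C (Cmp C h g) f) \<and>
     (\<forall>X \<in> Ob C. \<forall>Y \<in> Ob C. \<forall>f \<in> hom C X Y.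
        Cmp C f (Id C X) = f \<and> Cmp C (Id C Y) f = f)"

definition preadditive :: "('o, 'm, 'x) addcat_scheme \<Rightarrow> bool" where
  "preadditive C \<longleftrightarrow> category C \<and>
     (\<forall>X \<in> Ob C. \<forall>Y \<in> Ob C.
        Zero C X Y \<in> hom C X Y \<and>
        (\<forall>f \<in> hom C X Y. \<forall>g \<in> hom C X Y. Add C f g \<in> hom C X Y) \<and>
        (\<forall>f \<in> hom C X Y. Neg C f \<in> hom C X Y) \<and>
        (\<forall>f \<in> hom C X Y. \<forall>g \<in> hom C X Y. \<forall>h \<in> hom C X Y.
           Add C (Add C f g) h = Add C f (Add C g h)) \<and>
        (\<forall>f \<in> hom C X Y. \<forall>g \<in> hom C X Y. Add C f g = Add C g f) \<and>
        (\<forall>f \<in> hom C X Y. Add C f (Zero C X Y) = f) \<and>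
        (\<forall>f \<in> hom C X Y. Add C f (Neg C f) = Zero C X Y)) \<and>
     (\<forall>X \<in> Ob C. \<forall>Y \<in> Ob C. \<forall>Z \<in> Ob C.
        (\<forall>h \<in> hom C Y Z. \<forall>f \<in> hom C X Y. \<forall>g \<in> hom C X Y.
           Cmp C h (Add C f g) = Add C (Cmp C h f) (Cmp C h g)) \<and>
        (\<forall>f \<in> hom C Y Z. \<forall>g \<in> hom C Y Z. \<forall>h \<in> hom C X Y.
           Cmp C (Add C f g) h = Add C (Cmp C f h) (Cmp C g h)))"

definition zero_object :: "('o, 'm, 'x) addcat_scheme \<Rightarrow> 'o \<Rightarrow> bool" where
  "zero_object C Z0 \<longleftrightarrow> Z0 \<in> Ob C \<and>
     (\<forall>X \<in> Ob C. (\<exists>!f. f \<in> hom C Z0 X) \<and> (\<exists>!f. f \<in> hom C X Z0))"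

definition is_biproduct ::
  "('o, 'm, 'x) addcat_scheme \<Rightarrow> 'o \<Rightarrow> 'o \<Rightarrow> 'o \<Rightarrow> 'm \<Rightarrow> 'm \<Rightarrow> 'm \<Rightarrow> 'm \<Rightarrow> bool" where
  "is_biproduct C X Y B i1 i2 p1 p2 \<longleftrightarrow> B \<in> Ob C \<and>
     i1 \<in> hom C X B \<and> i2 \<in> hom C Y B \<and> p1 \<in> hom C B X \<and> p2 \<in> hom C B Y \<and>
     Cmp C p1 i1 = Id C X \<and> Cmp C p2 i2 = Id C Y \<and>
     Cmp C p2 i1 = Zero C X Y \<and> Cmp C p1 i2 = Zero C Y X \<and>
     Add C (Cmp C i1 p1) (Cmp C i2 p2) = Id C B"

definition additive :: "('o, 'm, 'x) addcat_scheme \<Rightarrow> bool" where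
  "additive C \<longleftrightarrow> preadditive C \<and> (\<exists>Z0. zero_object C Z0) \<and>
     (\<forall>X \<in> Ob C. \<forall>Y \<in> Ob C. \<exists>B i1 i2 p1 p2. is_biproduct C X Y B i1 i2 p1 p2)"

definition is_kernel :: "('o, 'm, 'x) addcat_scheme \<Rightarrow> 'm \<Rightarrow> 'm \<Rightarrow> bool" where
  "is_kernel C k p \<longleftrightarrow> k \<in> Ar C \<and> p \<in> Ar C \<and> Cod C k = Dom C p \<and>
     Cmp C p k = Zero C (Dom C k) (Cod C p) \<and>
     (\<forall>T \<in> Ob C. \<forall>t \<in> hom C T (Dom C p). Cmp C p t = Zero C T (Cod C p) \<longrightarrow>
        (\<exists>!u. u \<in> hom C T (Dom C k) \<and> Cmp C k u = t))"

definition is_cokernel :: "('o, 'm, 'x) addcat_scheme \<Rightarrow> 'm \<Rightarrow> 'm \<Rightarrow> bool" where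
  "is_cokernel C c i \<longleftrightarrow> c \<in> Ar C \<and> i \<in> Ar C \<and> Cod C i = Dom C c \<and>
     Cmp C c i = Zero C (Dom C i) (Cod C c) \<and>
     (\<forall>T \<in> Ob C. \<forall>t \<in> hom C (Cod C i) T. Cmp C t i = Zero C (Dom C i) T \<longrightarrow>
        (\<exists>!u. u \<in> hom C (Cod C c) T \<and> Cmp C u c = t))"

definition kernel_cokernel_pair :: "('o, 'm, 'x) addcat_scheme \<Rightarrow> 'm \<Rightarrow> 'm \<Rightarrow> bool" where
  "kernel_cokernel_pair C i p \<longleftrightarrow> is_kernel C i p \<and> is_cokernel C p i"

definition iso :: "('o, 'm, 'x) addcat_scheme \<Rightarrow> 'm \<Rightarrow> bool" where
  "iso C f \<longleftrightarrow> f \<in> Ar C \<and> (\<exists>g \<in> hom C (Cod C f) (Dom C f).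
     Cmp C g f = Id C (Dom C f) \<and> Cmp C f g = Id C (Cod C f))"

definition is_pullback ::
  "('o, 'm, 'x) addcat_scheme \<Rightarrow> 'm \<Rightarrow> 'm \<Rightarrow> 'o \<Rightarrow> 'm \<Rightarrow> 'm \<Rightarrow> bool" where
  "is_pullback C p t P p' t' \<longleftrightarrow> P \<in> Ob C \<and>
     p' \<in> hom C P (Dom C t) \<and> t' \<in> hom C P (Dom C p) \<and> Cod C p = Cod C t \<and>
     Cmp C p t' = Cmp C t p' \<and>
     (\<forall>T \<in> Ob C. \<forall>a \<in> hom C T (Dom C t). \<forall>b \<in> hom C T (Dom C p).
        Cmp C p b = Cmp C t a \<longrightarrow>
        (\<exists>!u. u \<in> hom C T P \<and> Cmp C p' u = a \<and> Cmp C t' u = b))"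

definition is_pushout ::
  "('o, 'm, 'x) addcat_scheme \<Rightarrow> 'm \<Rightarrow> 'm \<Rightarrow> 'o \<Rightarrow> 'm \<Rightarrow> 'm \<Rightarrow> bool" where
  "is_pushout C a b P a' b' \<longleftrightarrow> P \<in> Ob C \<and>
     a' \<in> hom C (Cod C b) P \<and> b' \<in> hom C (Cod C a) P \<and> Dom C a = Dom C b \<and>
     Cmp C b' a = Cmp C a' b \<and>
     (\<forall>T \<in> Ob C. \<forall>x \<in> hom C (Cod C b) T. \<forall>y \<in> hom C (Cod C a) T.
        Cmp C y a = Cmp C x b \<longrightarrow>
        (\<exists>!u. u \<in> hom C P T \<and> Cmp C u a' = x \<and> Cmp C u b' = y))"

definition conflation_category :: "('o, 'm, 'x) addcat_scheme \<Rightarrow> ('m \<times> 'm) set \<Rightarrow> bool" where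
  "conflation_category C E \<longleftrightarrow> additive C \<and>
     (\<forall>(i, p) \<in> E. kernel_cokernel_pair C i p) \<and>
     (\<forall>(i, p) \<in> E. \<forall>i' p' x y z.
        i' \<in> Ar C \<and> p' \<in> Ar C \<and> Cod C i' = Dom C p' \<and> iso C x \<and> iso C y \<and> iso C z \<and>
        x \<in> hom C (Dom C i) (Dom C i') \<and> y \<in> hom C (Cod C i) (Cod C i') \<and>
        z \<in> hom C (Cod C p) (Cod C p') \<and>
        Cmp C i' x = Cmp C y i \<and> Cmp C p' y = Cmp C z p \<longrightarrow> (i', p') \<in> E)"

definition inflation :: "('o, 'm, 'x) addcat_scheme \<Rightarrow> ('m \<times> 'm) set \<Rightarrow> 'm \<Rightarrow> bool" where
  "inflation C E i \<longleftrightarrow> (\<exists>p. (i, p) \<in> E)"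

definition deflation :: "('o, 'm, 'x) addcat_scheme \<Rightarrow> ('m \<times> 'm) set \<Rightarrow> 'm \<Rightarrow> bool" where
  "deflation C E p \<longleftrightarrow> (\<exists>i. (i, p) \<in> E)"

definition deflation_exact :: "('o, 'm, 'x) addcat_scheme \<Rightarrow> ('m \<times> 'm) set \<Rightarrow> bool" where
  "deflation_exact C E \<longleftrightarrow> conflation_category C E \<and>
     \<comment> \<open>R0\<close>
     (\<forall>Z0. zero_object C Z0 \<longrightarrow> deflation C E (Id C Z0)) \<and>
     \<comment> \<open>R1\<close>
     (\<forall>p q. deflation C E p \<and> deflation C E q \<and> Cod C p = Dom C q \<longrightarrow>
        deflation C E (Cmp C q p)) \<and>
     \<comment> \<open>R2\<close>
     (\<forall>p t. deflation C E p \<and> t \<in> Ar C \<and> Cod C t = Cod C p \<longrightarrow>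
        (\<exists>P p' t'. is_pullback C p t P p' t' \<and> deflation C E p'))"

definition axiom_A3 :: "('o, 'm, 'x) addcat_scheme \<Rightarrow> ('m \<times> 'm) set \<Rightarrow> 'o set \<Rightarrow> bool" where
  "axiom_A3 C E A \<longleftrightarrow>
     (\<forall>a b. inflation C E a \<and> deflation C E b \<and> Dom C a = Dom C b \<and> Cod C b \<in> A \<longrightarrow>
        (\<exists>P a' b'. is_pushout C a b P a' b' \<and> deflation C E b' \<and> inflation C E a'))"

definition A_inv_inflation :: "('o, 'm, 'x) addcat_scheme \<Rightarrow> ('m \<times> 'm) set \<Rightarrow> 'o set \<Rightarrow> 'm \<Rightarrow> bool" where
  "A_inv_inflation C E A i \<longleftrightarrow> (\<exists>p. (i, p) \<in> E \<and> Cod C p \<in> A)"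

end

theory Submission
  imports Defs
begin

(* Let p : Y -> A0 be the cokernel of f, with A0 in A, and q the cokernel of g. By (A3) the
   pushout of g along p yields a deflation b' : Z -> P and an inflation a' : A0 -> P. Then g f is
   a kernel of b': b' g f = a' p f = 0, and if b' t = 0 then q t = 0 (q factors through b' since
   q g = 0 = 0 p), so t = g s; now a' p s = b' t = 0 and a' is monic, so p s = 0 and s = f u.
   As b' is a deflation, its kernel g f is an inflation by closure of conflations under
   isomorphism. *)

lemma hom_iff: "f \<in> hom C X Y \<longleftrightarrow> f \<in> Ar C \<and> Dom C f = X \<and> Cod C f = Y"
  by (simp add: hom_def)

lemma hom_objects: "category C \<Longrightarrow> f \<in> hom C X Y \<Longrightarrow> X \<in> Ob C \<and> Y \<in> Ob C"
  unfolding category_def hom_def by auto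

lemma cmp_in_hom:
  "category C \<Longrightarrow> f \<in> hom C X Y \<Longrightarrow> g \<in> hom C Y Z \<Longrightarrow> Cmp C g f \<in> hom C X Z"
  using hom_objects[of C f X Y] hom_objects[of C g Y Z] unfolding category_def by blast

lemma cmp_assoc:
  "category C \<Longrightarrow> f \<in> hom C W X \<Longrightarrow> g \<in> hom C X Y \<Longrightarrow> h \<in> hom C Y Z
   \<Longrightarrow> Cmp C h (Cmp C g f) = Cmp C (Cmp C h g) f"
  using hom_objects[of C f W X] hom_objects[of C g X Y] hom_objects[of C h Y Z]
  unfolding category_def by blast

lemma id_in_hom: "category C \<Longrightarrow> X \<in> Ob C \<Longrightarrow> Id C X \<in> hom C X X"
  unfolding category_def by blast

lemma cmp_id_right: "category C \<Longrightarrow> f \<in> hom C X Y \<Longrightarrow> Cmp C f (Id C X) = f"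
  using hom_objects[of C f X Y] unfolding category_def by blast

lemma cmp_id_left: "category C \<Longrightarrow> f \<in> hom C X Y \<Longrightarrow> Cmp C (Id C Y) f = f"
  using hom_objects[of C f X Y] unfolding category_def by blast

lemma iso_id: "category C \<Longrightarrow> X \<in> Ob C \<Longrightarrow> iso C (Id C X)"
  unfolding iso_def using id_in_hom cmp_id_left by (fastforce simp: hom_iff)

lemma preadditive_category: "preadditive C \<Longrightarrow> category C"
  unfolding preadditive_def by blast

lemma zero_in_hom: "preadditive C \<Longrightarrow> X \<in> Ob C \<Longrightarrow> Y \<in> Ob C \<Longrightarrow> Zero C X Y \<in> hom C X Y"
  unfolding preadditive_def by blast

lemma add_right_inverse:
  "preadditive C \<Longrightarrow> X \<in> Ob C \<Longrightarrow> Y \<in> Ob C \<Longrightarrow> f \<in> hom C X Y \<Longrightarrow>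
   Neg C f \<in> hom C X Y \<and> Add C f (Neg C f) = Zero C X Y"
  unfolding preadditive_def by blast

lemma add_zero_right:
  "preadditive C \<Longrightarrow> X \<in> Ob C \<Longrightarrow> Y \<in> Ob C \<Longrightarrow> f \<in> hom C X Y \<Longrightarrow>
   Add C f (Zero C X Y) = f"
  unfolding preadditive_def by blast

lemma add_assoc_hom:
  "preadditive C \<Longrightarrow> X \<in> Ob C \<Longrightarrow> Y \<in> Ob C \<Longrightarrow>
   f \<in> hom C X Y \<Longrightarrow> g \<in> hom C X Y \<Longrightarrow> h \<in> hom C X Y \<Longrightarrow>
   Add C (Add C f g) h = Add C f (Add C g h)"
  unfolding preadditive_def by blast

lemma cmp_add_right:
  "preadditive C \<Longrightarrow> X \<in> Ob C \<Longrightarrow> Y \<in> Ob C \<Longrightarrow> Z \<in> Ob C \<Longrightarrow>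
   h \<in> hom C Y Z \<Longrightarrow> f \<in> hom C X Y \<Longrightarrow> g \<in> hom C X Y \<Longrightarrow>
   Cmp C h (Add C f g) = Add C (Cmp C h f) (Cmp C h g)"
  unfolding preadditive_def by blast

lemma cmp_add_left:
  "preadditive C \<Longrightarrow> X \<in> Ob C \<Longrightarrow> Y \<in> Ob C \<Longrightarrow> Z \<in> Ob C \<Longrightarrow>
   f \<in> hom C Y Z \<Longrightarrow> g \<in> hom C Y Z \<Longrightarrow> h \<in> hom C X Y \<Longrightarrow>
   Cmp C (Add C f g) h = Add C (Cmp C f h) (Cmp C g h)"
  unfolding preadditive_def Ball_def by metis

lemma add_self_eq_zero:
  assumes pa: "preadditive C" and X: "X \<in> Ob C" and Y: "Y \<in> Ob C" and z: "z \<in> hom C X Y"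
    and zz: "Add C z z = z"
  shows "z = Zero C X Y"
proof -
  have n: "Neg C z \<in> hom C X Y" and inv: "Add C z (Neg C z) = Zero C X Y"
    using add_right_inverse[OF pa X Y z] by auto
  have "Zero C X Y = Add C (Add C z z) (Neg C z)"
    using inv zz by simp
  also have "\<dots> = Add C z (Add C z (Neg C z))"
    using add_assoc_hom[OF pa X Y z z n] .
  also have "\<dots> = z"
    using inv add_zero_right[OF pa X Y z] by simp
  finally show ?thesis by simp
qed

lemma cmp_zero_right:
  assumes pa: "preadditive C" and X: "X \<in> Ob C" and h: "h \<in> hom C Y Z"
  shows "Cmp C h (Zero C X Y) = Zero C X Z"
proof -
  have cat: "category C"
    using preadditive_category[OF pa] .
  have Y: "Y \<in> Ob C" and Z: "Z \<in> Ob C"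
    using hom_objects[OF cat h] by auto
  have z: "Zero C X Y \<in> hom C X Y"
    using zero_in_hom[OF pa X Y] .
  have "Cmp C h (Zero C X Y) = Cmp C h (Add C (Zero C X Y) (Zero C X Y))"
    using add_zero_right[OF pa X Y z] by simp
  also have "\<dots> = Add C (Cmp C h (Zero C X Y)) (Cmp C h (Zero C X Y))"
    using cmp_add_right[OF pa X Y Z h z z] .
  finally show ?thesis
    using add_self_eq_zero[OF pa X Z cmp_in_hom[OF cat z h]] by simp
qed

lemma cmp_zero_left:
  assumes pa: "preadditive C" and Z: "Z \<in> Ob C" and h: "h \<in> hom C X Y"
  shows "Cmp C (Zero C Y Z) h = Zero C X Z"
proof -
  have cat: "category C"
    using preadditive_category[OF pa] .
  have X: "X \<in> Ob C" and Y: "Y \<in> Ob C"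
    using hom_objects[OF cat h] by auto
  have z: "Zero C Y Z \<in> hom C Y Z"
    using zero_in_hom[OF pa Y Z] .
  have "Cmp C (Zero C Y Z) h = Cmp C (Add C (Zero C Y Z) (Zero C Y Z)) h"
    using add_zero_right[OF pa Y Z z] by simp
  also have "\<dots> = Add C (Cmp C (Zero C Y Z) h) (Cmp C (Zero C Y Z) h)"
    using cmp_add_left[OF pa X Y Z z z h] .
  finally show ?thesis
    using add_self_eq_zero[OF pa X Z cmp_in_hom[OF cat h z]] by simp
qed

definition monic :: "('o, 'm, 'x) addcat_scheme \<Rightarrow> 'm \<Rightarrow> bool" where
  "monic C m \<longleftrightarrow> m \<in> Ar C \<and>
     (\<forall>T u v. u \<in> hom C T (Dom C m) \<and> v \<in> hom C T (Dom C m) \<and> Cmp C m u = Cmp C m v \<longrightarrow> u = v)"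

lemma monicI:
  "m \<in> Ar C \<Longrightarrow>
   (\<And>T u v. u \<in> hom C T (Dom C m) \<Longrightarrow> v \<in> hom C T (Dom C m) \<Longrightarrow> Cmp C m u = Cmp C m v
     \<Longrightarrow> u = v)
   \<Longrightarrow> monic C m"
  unfolding monic_def by blast

lemma monicD:
  "monic C m \<Longrightarrow> u \<in> hom C T (Dom C m) \<Longrightarrow> v \<in> hom C T (Dom C m) \<Longrightarrow> Cmp C m u = Cmp C m v
   \<Longrightarrow> u = v"
  unfolding monic_def by blast

lemma monic_cmp:
  assumes cat: "category C" and f: "monic C f" and g: "monic C g" and fg: "Cod C f = Dom C g"
  shows "monic C (Cmp C g f)"
proof -
  have fh: "f \<in> hom C (Dom C f) (Dom C g)" and gh: "g \<in> hom C (Dom C g) (Cod C g)"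
    using f g fg unfolding monic_def by (auto simp: hom_iff)
  have gfh: "Cmp C g f \<in> hom C (Dom C f) (Cod C g)"
    using cmp_in_hom[OF cat fh gh] .
  show ?thesis
  proof (rule monicI)
    show "Cmp C g f \<in> Ar C"
      using gfh by (simp add: hom_iff)
    fix T u v
    assume "u \<in> hom C T (Dom C (Cmp C g f))" and "v \<in> hom C T (Dom C (Cmp C g f))"
    then have u: "u \<in> hom C T (Dom C f)" and v: "v \<in> hom C T (Dom C f)"
      using gfh by (simp_all add: hom_iff)
    assume "Cmp C (Cmp C g f) u = Cmp C (Cmp C g f) v"
    then have "Cmp C g (Cmp C f u) = Cmp C g (Cmp C f v)"
      using cmp_assoc[OF cat u fh gh] cmp_assoc[OF cat v fh gh] by simp
    then have "Cmp C f u = Cmp C f v"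
      using monicD[OF g cmp_in_hom[OF cat u fh] cmp_in_hom[OF cat v fh]] by simp
    then show "u = v"
      by (rule monicD[OF f u v])
  qed
qed

lemma kernel_arrows:
  assumes "is_kernel C k p"
  shows "k \<in> hom C (Dom C k) (Dom C p)" and "p \<in> hom C (Dom C p) (Cod C p)"
    and "Cmp C p k = Zero C (Dom C k) (Cod C p)"
proof -
  have "k \<in> Ar C" "p \<in> Ar C" "Cod C k = Dom C p" "Cmp C p k = Zero C (Dom C k) (Cod C p)"
    using assms unfolding is_kernel_def by blast+
  then show "k \<in> hom C (Dom C k) (Dom C p)" "p \<in> hom C (Dom C p) (Cod C p)"
    "Cmp C p k = Zero C (Dom C k) (Cod C p)"
    by (simp_all add: hom_iff)
qed

lemma kernel_universal:
  assumes "is_kernel C k p"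
    and "T \<in> Ob C" and "t \<in> hom C T (Dom C p)" and "Cmp C p t = Zero C T (Cod C p)"
  shows "\<exists>!u. u \<in> hom C T (Dom C k) \<and> Cmp C k u = t"
proof -
  have "\<forall>T \<in> Ob C. \<forall>t \<in> hom C T (Dom C p). Cmp C p t = Zero C T (Cod C p) \<longrightarrow>
      (\<exists>!u. u \<in> hom C T (Dom C k) \<and> Cmp C k u = t)"
    by (rule assms(1)[unfolded is_kernel_def, THEN conjunct2, THEN conjunct2, THEN conjunct2,
          THEN conjunct2])
  then show ?thesis
    using assms(2-4) by blast
qed

lemma kernel_factor:
  assumes "is_kernel C k p"
    and "T \<in> Ob C" and "t \<in> hom C T (Dom C p)" and "Cmp C p t = Zero C T (Cod C p)"
  shows "\<exists>u \<in> hom C T (Dom C k). Cmp C k u = t"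
  using kernel_universal[OF assms] by blast

lemma kernel_monic:
  assumes pa: "preadditive C" and k: "is_kernel C k p"
  shows "monic C k"
proof -
  have cat: "category C"
    using preadditive_category[OF pa] .
  have kh: "k \<in> hom C (Dom C k) (Dom C p)" and ph: "p \<in> hom C (Dom C p) (Cod C p)"
    and pk: "Cmp C p k = Zero C (Dom C k) (Cod C p)"
    using kernel_arrows[OF k] .
  show ?thesis
  proof (rule monicI)
    show "k \<in> Ar C"
      using kh by (simp add: hom_iff)
    fix T u v
    assume u: "u \<in> hom C T (Dom C k)" and v: "v \<in> hom C T (Dom C k)"
      and eq: "Cmp C k u = Cmp C k v"
    have T: "T \<in> Ob C" and P: "Cod C p \<in> Ob C"
      using hom_objects[OF cat u] hom_objects[OF cat ph] by auto
    have "Cmp C p (Cmp C k u) = Zero C T (Cod C p)"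
      using cmp_assoc[OF cat u kh ph] pk cmp_zero_left[OF pa P u] by simp
    from kernel_universal[OF k T cmp_in_hom[OF cat u kh] this] show "u = v"
      using u v eq by (metis (mono_tags))
  qed
qed

lemma is_kernelI:
  assumes "k \<in> hom C X Y" and "p \<in> hom C Y Z" and "Cmp C p k = Zero C X Z" and "monic C k"
    and "\<And>T t. T \<in> Ob C \<Longrightarrow> t \<in> hom C T Y \<Longrightarrow> Cmp C p t = Zero C T Z \<Longrightarrow>
           \<exists>u \<in> hom C T X. Cmp C k u = t"
  shows "is_kernel C k p"
proof -
  have k: "k \<in> Ar C" "Dom C k = X" "Cod C k = Y" and p: "p \<in> Ar C" "Dom C p = Y" "Cod C p = Z"
    using assms(1,2) by (auto simp: hom_iff)
  have "\<exists>!u. u \<in> hom C T X \<and> Cmp C k u = t"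
    if factorizable: "T \<in> Ob C" "t \<in> hom C T Y" "Cmp C p t = Zero C T Z" for T t
  proof -
    obtain u where u: "u \<in> hom C T X" "Cmp C k u = t"
      using assms(5)[OF factorizable] by blast
    show ?thesis
    proof (rule ex1I)
      show "u \<in> hom C T X \<and> Cmp C k u = t"
        using u by blast
      fix w
      assume "w \<in> hom C T X \<and> Cmp C k w = t"
      then show "w = u"
        using monicD[OF assms(4), of w T u] u k(2) by simp
    qed
  qed
  then show ?thesis
    unfolding is_kernel_def using k p assms(3) by simp
qed

lemma kernels_iso:
  assumes pa: "preadditive C" and k: "is_kernel C k p" and k': "is_kernel C k' p"
  shows "\<exists>x \<in> hom C (Dom C k) (Dom C k'). iso C x \<and> Cmp C k' x = k"
proof -
  have cat: "category C"
    using preadditive_category[OF pa] .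
  have kh: "k \<in> hom C (Dom C k) (Dom C p)" and pk: "Cmp C p k = Zero C (Dom C k) (Cod C p)"
    and k'h: "k' \<in> hom C (Dom C k') (Dom C p)" and pk': "Cmp C p k' = Zero C (Dom C k') (Cod C p)"
    using kernel_arrows[OF k] kernel_arrows[OF k'] by auto
  have K: "Dom C k \<in> Ob C" and K': "Dom C k' \<in> Ob C"
    using hom_objects[OF cat kh] hom_objects[OF cat k'h] by auto
  obtain x where xh: "x \<in> hom C (Dom C k) (Dom C k')" and x: "Cmp C k' x = k"
    using kernel_factor[OF k' K kh pk] by blast
  obtain y where yh: "y \<in> hom C (Dom C k') (Dom C k)" and y: "Cmp C k y = k'"
    using kernel_factor[OF k K' k'h pk'] by blast
  have "Cmp C y x = Id C (Dom C k)"
  proof (rule monicD[OF kernel_monic[OF pa k]])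
    show "Cmp C y x \<in> hom C (Dom C k) (Dom C k)" "Id C (Dom C k) \<in> hom C (Dom C k) (Dom C k)"
      using cmp_in_hom[OF cat xh yh] id_in_hom[OF cat K] .
    show "Cmp C k (Cmp C y x) = Cmp C k (Id C (Dom C k))"
      using cmp_assoc[OF cat xh yh kh] x y cmp_id_right[OF cat kh] by simp
  qed
  moreover have "Cmp C x y = Id C (Dom C k')"
  proof (rule monicD[OF kernel_monic[OF pa k']])
    show "Cmp C x y \<in> hom C (Dom C k') (Dom C k')" "Id C (Dom C k') \<in> hom C (Dom C k') (Dom C k')"
      using cmp_in_hom[OF cat yh xh] id_in_hom[OF cat K'] .
    show "Cmp C k' (Cmp C x y) = Cmp C k' (Id C (Dom C k'))"
      using cmp_assoc[OF cat yh xh k'h] x y cmp_id_right[OF cat k'h] by simp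
  qed
  ultimately have "iso C x"
    unfolding iso_def using xh yh by (auto simp: hom_iff intro!: bexI[of _ y])
  then show ?thesis
    using xh x by blast
qed

lemma conflation_preadditive: "conflation_category C E \<Longrightarrow> preadditive C"
  unfolding conflation_category_def additive_def by blast

lemma conflation_is_kernel: "conflation_category C E \<Longrightarrow> (i, p) \<in> E \<Longrightarrow> is_kernel C i p"
  unfolding conflation_category_def kernel_cokernel_pair_def by blast

lemma conflation_iso_closed:
  assumes "conflation_category C E" and "(i, p) \<in> E"
    and "i' \<in> Ar C" and "p' \<in> Ar C" and "Cod C i' = Dom C p'"
    and "iso C x" and "iso C y" and "iso C z"
    and "x \<in> hom C (Dom C i) (Dom C i')" and "y \<in> hom C (Cod C i) (Cod C i')"
    and "z \<in> hom C (Cod C p) (Cod C p')"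
    and "Cmp C i' x = Cmp C y i" and "Cmp C p' y = Cmp C z p"
  shows "(i', p') \<in> E"
proof -
  have "\<forall>(i, p) \<in> E. \<forall>i' p' x y z.
      i' \<in> Ar C \<and> p' \<in> Ar C \<and> Cod C i' = Dom C p' \<and> iso C x \<and> iso C y \<and> iso C z \<and>
      x \<in> hom C (Dom C i) (Dom C i') \<and> y \<in> hom C (Cod C i) (Cod C i') \<and>
      z \<in> hom C (Cod C p) (Cod C p') \<and>
      Cmp C i' x = Cmp C y i \<and> Cmp C p' y = Cmp C z p \<longrightarrow> (i', p') \<in> E"
    by (rule assms(1)[unfolded conflation_category_def, THEN conjunct2, THEN conjunct2])
  from bspec[OF this assms(2)] show ?thesis
    unfolding prod.case using assms(3-) by blast
qed

lemma conflation_replace_kernel: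
  assumes cc: "conflation_category C E" and ip: "(i, p) \<in> E" and k: "is_kernel C k p"
  shows "(k, p) \<in> E"
proof -
  have pa: "preadditive C"
    using conflation_preadditive[OF cc] .
  have cat: "category C"
    using preadditive_category[OF pa] .
  have i: "is_kernel C i p"
    using conflation_is_kernel[OF cc ip] .
  obtain x where xh: "x \<in> hom C (Dom C i) (Dom C k)" and iso: "iso C x" and x: "Cmp C k x = i"
    using kernels_iso[OF pa i k] by blast
  have kh: "k \<in> hom C (Dom C k) (Dom C p)" and ph: "p \<in> hom C (Dom C p) (Cod C p)"
    and ih: "i \<in> hom C (Dom C i) (Dom C p)"
    using kernel_arrows[OF k] kernel_arrows[OF i] by auto
  have Y: "Dom C p \<in> Ob C" and Z: "Cod C p \<in> Ob C"
    using hom_objects[OF cat ph] by auto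
  show ?thesis
  proof (rule conflation_iso_closed[OF cc ip _ _ _ iso iso_id[OF cat Y] iso_id[OF cat Z]])
    show "Cmp C k x = Cmp C (Id C (Dom C p)) i"
      using x cmp_id_left[OF cat ih] by simp
    show "Cmp C p (Id C (Dom C p)) = Cmp C (Id C (Cod C p)) p"
      using cmp_id_left[OF cat ph] cmp_id_right[OF cat ph] by simp
  qed (use kh ph ih xh id_in_hom[OF cat Y] id_in_hom[OF cat Z] in \<open>auto simp: hom_iff\<close>)
qed

lemma pushout_factor:
  assumes "is_pushout C a b P a' b'"
    and "T \<in> Ob C" and "x \<in> hom C (Cod C b) T" and "y \<in> hom C (Cod C a) T"
    and "Cmp C y a = Cmp C x b"
  shows "\<exists>u \<in> hom C P T. Cmp C u a' = x \<and> Cmp C u b' = y"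
proof -
  have "\<forall>T \<in> Ob C. \<forall>x \<in> hom C (Cod C b) T. \<forall>y \<in> hom C (Cod C a) T.
      Cmp C y a = Cmp C x b \<longrightarrow> (\<exists>!u. u \<in> hom C P T \<and> Cmp C u a' = x \<and> Cmp C u b' = y)"
    by (rule assms(1)[unfolded is_pushout_def, THEN conjunct2, THEN conjunct2, THEN conjunct2,
          THEN conjunct2, THEN conjunct2])
  from this[rule_format, OF assms(2-5)] show ?thesis
    by (rule ex1E) blast
qed

lemma kernel_cmp_via_pushout:
  assumes pa: "preadditive C" and f: "is_kernel C f p" and g: "is_kernel C g q"
    and fg: "Cod C f = Dom C g" and po: "is_pushout C g p P a' b'" and a': "monic C a'"
  shows "is_kernel C (Cmp C g f) b'"
proof -
  have cat: "category C"
    using preadditive_category[OF pa] .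
  define X Y Z A W where "X = Dom C f" "Y = Dom C g" "Z = Cod C g" "A = Cod C p" "W = Cod C q"
  have fh: "f \<in> hom C X Y" and ph: "p \<in> hom C Y A" and pf: "Cmp C p f = Zero C X A"
    and gh: "g \<in> hom C Y Z" and qh: "q \<in> hom C Z W" and qg: "Cmp C q g = Zero C Y W"
    and Dp: "Dom C p = Y" and Dq: "Dom C q = Z"
    using kernel_arrows[OF f] kernel_arrows[OF g] fg unfolding X_Y_Z_A_W_def by (auto simp: hom_iff)
  have a'h: "a' \<in> hom C A P" and b'h: "b' \<in> hom C Z P" and P: "P \<in> Ob C"
    and square: "Cmp C b' g = Cmp C a' p"
    using po unfolding is_pushout_def X_Y_Z_A_W_def by auto
  have X: "X \<in> Ob C" and A: "A \<in> Ob C" and W: "W \<in> Ob C"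
    using hom_objects[OF cat fh] hom_objects[OF cat ph] hom_objects[OF cat qh] by auto
  have gfh: "Cmp C g f \<in> hom C X Z"
    using cmp_in_hom[OF cat fh gh] .
  obtain q' where q'h: "q' \<in> hom C P W" and q': "Cmp C q' b' = q"
  proof -
    have "Cmp C q g = Cmp C (Zero C A W) p"
      using qg cmp_zero_left[OF pa W ph] by simp
    then show ?thesis
      using pushout_factor[OF po W _ _] that zero_in_hom[OF pa A W] qh
      unfolding X_Y_Z_A_W_def by blast
  qed
  show ?thesis
  proof (rule is_kernelI[OF gfh b'h])
    show "Cmp C b' (Cmp C g f) = Zero C X P"
      using cmp_assoc[OF cat fh gh b'h] square cmp_assoc[OF cat fh ph a'h] pf cmp_zero_right[OF pa X a'h]
      by simp
    show "monic C (Cmp C g f)"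
      using monic_cmp[OF cat kernel_monic[OF pa f] kernel_monic[OF pa g] fg] .
  next
    fix T t
    assume T: "T \<in> Ob C" and th: "t \<in> hom C T Z" and b't: "Cmp C b' t = Zero C T P"
    have "Cmp C q t = Zero C T W"
      using q' cmp_assoc[OF cat th b'h q'h] b't cmp_zero_right[OF pa T q'h] by simp
    then obtain s where sh: "s \<in> hom C T Y" and s: "Cmp C g s = t"
      using kernel_factor[OF g T] th Dq unfolding X_Y_Z_A_W_def by auto
    have "Cmp C a' (Cmp C p s) = Cmp C a' (Zero C T A)"
      using cmp_assoc[OF cat sh ph a'h] square cmp_assoc[OF cat sh gh b'h] s b't
        cmp_zero_right[OF pa T a'h] by simp
    then have "Cmp C p s = Zero C T A"
      using monicD[OF a'] cmp_in_hom[OF cat sh ph] zero_in_hom[OF pa T A] a'h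
      by (auto simp: hom_iff)
    then obtain u where uh: "u \<in> hom C T X" and u: "Cmp C f u = s"
      using kernel_factor[OF f T] sh Dp unfolding X_Y_Z_A_W_def by auto
    show "\<exists>u \<in> hom C T X. Cmp C (Cmp C g f) u = t"
      using uh cmp_assoc[OF cat uh fh gh] u s by auto
  qed
qed

theorem mainTheorem12:
  fixes C :: "('o, 'm, 'x) addcat_scheme" and E :: "('m \<times> 'm) set" and A :: "'o set"
  assumes "deflation_exact C E"
    and "A \<subseteq> Ob C" and "A \<noteq> {}"
    and "axiom_A3 C E A"
    and "inflation C E f" and "inflation C E g" and "Cod C f = Dom C g"
    and "A_inv_inflation C E A f"
  shows "inflation C E (Cmp C g f)"
proof -
  have cc: "conflation_category C E"
    using assms(1) unfolding deflation_exact_def by blast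
  note pa = conflation_preadditive[OF cc] and kernel = conflation_is_kernel[OF cc]
  obtain p where fp: "(f, p) \<in> E" and pA: "Cod C p \<in> A"
    using assms(8) unfolding A_inv_inflation_def by blast
  obtain q where gq: "(g, q) \<in> E"
    using assms(6) unfolding inflation_def by blast
  have "Dom C g = Dom C p"
    using assms(7) kernel_arrows(1)[OF kernel[OF fp]] by (simp add: hom_iff)
  then obtain P a' b' where po: "is_pushout C g p P a' b'"
    and b': "deflation C E b'" and a': "inflation C E a'"
    using assms(4,6) fp pA unfolding axiom_A3_def deflation_def by blast
  have "monic C a'"
    using a' kernel kernel_monic[OF pa] unfolding inflation_def by blast
  then have "is_kernel C (Cmp C g f) b'"
    using kernel_cmp_via_pushout[OF pa kernel[OF fp] kernel[OF gq] assms(7) po] by blast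
  then show ?thesis
    using b' conflation_replace_kernel[OF cc] unfolding deflation_def inflation_def by blast
qed

end
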